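(* Let $T=(V,E,r)$ be a finite rooted tree embedded in $\mathbb R^n$ as described in the context, and let $i,j,k$ be three adjacent nodes with $i<j$ and $i<k$, $j\neq k$ (i.e. $j$ and $k$ are distinct children of $i$). Assume: (A2) for all $x,x'\in[x_i,x_j]$ and $y,y'\in[x_i,x_k]$, $\ell([x_i,x])+\ell([x_i,y])\le\ell([x_i,x'])+\ell([x_i,y'])\Rightarrow\|\vec t(x)-\vec t(y)\|\le\|\vec t(x')-\vec t(y')\|$; (A3) there exist a neighborhood $U_i$ of $x_i$ and $0<a<2$ such that for all $x\in U_i\cap([x_i,x_j]\cup[x_i,x_k])$, $\|\vec t(x)-\vec t(x_i)\|\ge\ell([x_i,x])^a$. Then $$\langle\mu_{[x_i,x_j]},\mu_{[x_i,x_k]}\rangle_{W^\ast}=o\Big(\|\mu_{[x_i,x_j]}\|^2_{W^\ast}+\|\mu_{[x_i,x_k]}\|^2_{W^\ast}\Big)$$ as $\sigma_x,\sigma_t\to0$ with $\sigma_x\asymp\sigma_t$, where $\sigma_x\asymp\sigma_t$ means there exist constants $k_1,k_2>0$ with $k_1\sigma_x\le\sigma_t\le k_2\sigma_x$.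
   Context: Rooted tree and embedding. $T=(V,E,r)$ is a finite rooted tree with root $r$; $i<j$ means $i$ is the parent of $j$. The tree is embedded in $\mathbb R^n$ via an injective map $i\mapsto x_i\in\mathbb R^n$ and a map sending each edge $(i,j)$ to a smooth curve segment $[x_i,x_j]$ joining $x_i$ and $x_j$ (not necessarily a line segment); embeddings of two edges intersect only if the edges share a node, and only at the image of that node. The embedding of the path from $r$ to any node is a smooth, regular curve of finite length, oriented from the root to the end node; $[x,y]$ denotes the sub-arc between two points on a common embedded root-to-node path. $\ell(\gamma)$ is arc length, $\vec t(x)\in\mathbb S^{n-1}$ the unit oriented tangent vector at $x$ of the curve under consideration. For $\sigma_x,\sigma_t>0$ and smooth oriented curves $X,Y$ of finite length, $$\langle\mu_X,\mu_Y\rangle_{W^\ast}=\iint_{X\times Y} e^{-\|x-y\|^2/\sigma_x^2}\,e^{-\|\vec t(x)-\vec t(y)\|^2/\sigma_t^2}\,d\ell(x)\,d\ell(y),\qquad \|\mu_X\|^2_{W^\ast}=\langle\mu_X,\mu_X\rangle_{W^\ast}$$ (the oriented-varifold inner product induced by the Gaussian tensor-product kernel with parameters $\sigma_x,\sigma_t$). *)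

theory Defs
  imports "HOL-Analysis.Analysis"
begin

text \<open>A finite rooted tree: finite node set V, root r, parent function par.
  "i < j" (i is the parent of j) is rendered as  j \<in> V - {r} \<and> par j = i.\<close>
definition rooted_tree :: "'v set \<Rightarrow> 'v \<Rightarrow> ('v \<Rightarrow> 'v) \<Rightarrow> bool" where
  "rooted_tree V r par \<longleftrightarrow> finite V \<and> r \<in> V \<and>
     (\<forall>v\<in>V - {r}. par v \<in> V) \<and> (\<forall>v\<in>V. \<exists>m. (par ^^ m) v = r)"

definition smooth_unit_speed_on :: "real \<Rightarrow> (real \<Rightarrow> 'a::euclidean_space) \<Rightarrow> bool" where
  "smooth_unit_speed_on L f \<longleftrightarrow>
     (\<exists>D :: nat \<Rightarrow> real \<Rightarrow> 'a. D 0 = f \<and>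
        (\<forall>m. \<forall>s\<in>{0..L}. (D m has_vector_derivative D (Suc m) s) (at s within {0..L})) \<and>
        (\<forall>s\<in>{0..L}. norm (D 1 s) = 1))"

definition tangent :: "(real \<Rightarrow> 'a::euclidean_space) \<Rightarrow> real \<Rightarrow> real \<Rightarrow> 'a" where
  "tangent f L s = vector_derivative f (at s within {0..L})"

text \<open>Embedding of the rooted tree: node positions xp, and for each node v an arc-length
  parametrised root-to-v path P v on [0, L v]; the edge (par v, v) is the sub-arc
  P v ` {L (par v) .. L v}.\<close>
definition edge_img :: "('v \<Rightarrow> real \<Rightarrow> 'a) \<Rightarrow> ('v \<Rightarrow> real) \<Rightarrow> ('v \<Rightarrow> 'v) \<Rightarrow> 'v \<Rightarrow> 'a set" where
  "edge_img P L par v = P v ` {L (par v) .. L v}"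

definition tree_embedding ::
  "'v set \<Rightarrow> 'v \<Rightarrow> ('v \<Rightarrow> 'v) \<Rightarrow> ('v \<Rightarrow> 'a::euclidean_space) \<Rightarrow> ('v \<Rightarrow> real \<Rightarrow> 'a) \<Rightarrow> ('v \<Rightarrow> real) \<Rightarrow> bool" where
  "tree_embedding V r par xp P L \<longleftrightarrow>
     inj_on xp V \<and> L r = 0 \<and>
     (\<forall>v\<in>V. smooth_unit_speed_on (L v) (P v) \<and> P v 0 = xp r \<and> P v (L v) = xp v) \<and>
     (\<forall>v\<in>V - {r}. L (par v) < L v \<and> (\<forall>s\<in>{0..L (par v)}. P v s = P (par v) s) \<and>
                   inj_on (P v) {L (par v) .. L v}) \<and>
     (\<forall>v\<in>V - {r}. \<forall>w\<in>V - {r}. v \<noteq> w \<longrightarrow>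
        edge_img P L par v \<inter> edge_img P L par w \<subseteq> xp ` ({par v, v} \<inter> {par w, w}))"

text \<open>Oriented varifold inner product (Gaussian kernels) of the arc-length parametrised
  curves f|[a,b] (tangent tf) and g|[c,d] (tangent tg).\<close>
definition varifold_ip ::
  "real \<Rightarrow> real \<Rightarrow> (real \<Rightarrow> 'a::euclidean_space) \<Rightarrow> (real \<Rightarrow> 'a) \<Rightarrow> real \<Rightarrow> real
     \<Rightarrow> (real \<Rightarrow> 'a) \<Rightarrow> (real \<Rightarrow> 'a) \<Rightarrow> real \<Rightarrow> real \<Rightarrow> real" where
  "varifold_ip \<sigma>x \<sigma>t f tf a b g tg c d =
     integral {a..b} (\<lambda>s. integral {c..d} (\<lambda>u.
        exp (- (norm (f s - g u))\<^sup>2 / \<sigma>x\<^sup>2) * exp (- (norm (tf s - tg u))\<^sup>2 / \<sigma>t\<^sup>2)))"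

end

theory Submission
  imports Defs "HOL-Real_Asymp.Real_Asymp"
begin

(* Off a corner [L i, L i + tau]^2 of parameter space the cross kernel is small: far from x_i
   the two edges stay a fixed distance d apart, because they meet only at x_i; close to x_i,
   (A2) and (A3) force the tangents apart by at least tau^a (or by the fixed angle between the
   edges at x_i). So the cross term is at most tau^2 + O(exp (-d^2/sigma_x^2) +
   exp (-tau^(2a)/sigma_t^2)), which is o(sigma_x + sigma_t) for tau = sigma_t^beta with
   1/2 < beta < 1/a; this is where a < 2 enters. The self term of a unit-speed edge with
   Lipschitz tangent is at least of order sigma_x, as both Gaussians are bounded below on the
   band |s - u| <= sigma_x, and sigma_t is comparable to sigma_x. *)

lemma integral_nonneg_unconditional:
  fixes f :: "'n::euclidean_space \<Rightarrow> real"
  assumes "\<And>x. x \<in> S \<Longrightarrow> 0 \<le> f x"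
  shows "0 \<le> integral S f"
  by (metis assms integral_nonneg not_integrable_integral order_refl)

lemma integral_le_unconditional:
  fixes f g :: "'n::euclidean_space \<Rightarrow> real"
  assumes "g integrable_on S" "\<And>x. x \<in> S \<Longrightarrow> f x \<le> g x" "0 \<le> integral S g"
  shows "integral S f \<le> integral S g"
  by (metis assms integral_le not_integrable_integral)

lemma integral_le_step_plus_const:
  fixes h :: "real \<Rightarrow> real"
  assumes \<tau>: "0 \<le> \<tau>" "\<tau> \<le> d - c" and nonneg: "0 \<le> m" "0 \<le> E"
    and h: "\<And>x. x \<in> {c..d} \<Longrightarrow> h x \<le> (if x \<le> c + \<tau> then m else 0) + E"
  shows "integral {c..d} h \<le> m * \<tau> + E * (d - c)"
proof -
  define step where "step x = (if x \<in> {c..c + \<tau>} then m else 0) + E" for x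
  have "((\<lambda>x. if x \<in> {c..c + \<tau>} then m else 0) has_integral m * \<tau>) {c..d}"
    using has_integral_restrict_closed_subinterval[of "\<lambda>x. m" "m * \<tau>" c "c + \<tau>" c d]
      has_integral_const_real[of m c "c + \<tau>"] \<tau>
    by (simp add: mult.commute)
  then have step_integral: "(step has_integral m * \<tau> + E * (d - c)) {c..d}"
    unfolding step_def using has_integral_const_real[of E c d] \<tau>
    by (intro has_integral_add) (auto simp: mult.commute)
  have "integral {c..d} h \<le> integral {c..d} step"
    using step_integral h nonneg \<tau>
    by (intro integral_le_unconditional) (auto simp: step_def integral_unique)
  then show ?thesis using integral_unique[OF step_integral] by simp
qed

lemma double_integral_le_corner:
  fixes K :: "real \<Rightarrow> real \<Rightarrow> real"
  assumes \<tau>: "0 \<le> \<tau>" "\<tau> \<le> b - a" "\<tau> \<le> d - c" and E: "0 \<le> E"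
    and le_1: "\<And>s u. s \<in> {a..b} \<Longrightarrow> u \<in> {c..d} \<Longrightarrow> K s u \<le> 1"
    and off_corner: "\<And>s u. s \<in> {a..b} \<Longrightarrow> u \<in> {c..d} \<Longrightarrow> a + \<tau> < s \<or> c + \<tau> < u \<Longrightarrow> K s u \<le> E"
  shows "integral {a..b} (\<lambda>s. integral {c..d} (K s)) \<le> \<tau> * \<tau> + E * (b - a) * (d - c)"
proof -
  have inner: "integral {c..d} (K s) \<le> (if s \<le> a + \<tau> then \<tau> else 0) + E * (d - c)"
    if s: "s \<in> {a..b}" for s
  proof -
    have "integral {c..d} (K s) \<le> (if s \<le> a + \<tau> then 1 else 0) * \<tau> + E * (d - c)"
    proof (rule integral_le_step_plus_const)
      show "K s u \<le> (if u \<le> c + \<tau> then if s \<le> a + \<tau> then 1 else 0 else 0) + E"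
        if "u \<in> {c..d}" for u
        using le_1[OF s that] off_corner[OF s that] E by (auto simp: not_le)
    qed (use \<tau> E in auto)
    then show ?thesis by (cases "s \<le> a + \<tau>") simp_all
  qed
  have "integral {a..b} (\<lambda>s. integral {c..d} (K s)) \<le> \<tau> * \<tau> + E * (d - c) * (b - a)"
    by (rule integral_le_step_plus_const) (use \<tau> E inner in auto)
  then show ?thesis by (simp add: mult_ac)
qed

lemma double_integral_ge_near_diagonal:
  fixes K :: "real \<Rightarrow> real \<Rightarrow> real"
  assumes h: "0 < h" "h \<le> b - a"
    and cont: "continuous_on ({a..b} \<times> {a..b}) (\<lambda>(s, u). K s u)"
    and nonneg: "\<And>s u. s \<in> {a..b} \<Longrightarrow> u \<in> {a..b} \<Longrightarrow> 0 \<le> K s u"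
    and near: "\<And>s u. s \<in> {a..b} \<Longrightarrow> u \<in> {a..b} \<Longrightarrow> \<bar>s - u\<bar> \<le> h \<Longrightarrow> \<kappa> \<le> K s u"
  shows "\<kappa> * h * (b - a) \<le> integral {a..b} (\<lambda>s. integral {a..b} (K s))"
proof -
  have inner: "\<kappa> * h \<le> integral {a..b} (K s)" if s: "s \<in> {a..b}" for s
  proof -
    define p where "p = min s (b - h)"
    have p: "a \<le> p" "p + h \<le> b" "p \<le> s" "s \<le> p + h"
      using s h by (auto simp: p_def)
    have window: "((\<lambda>u. if u \<in> {p..p + h} then \<kappa> else 0) has_integral \<kappa> * h) {a..b}"
      using has_integral_restrict_closed_subinterval[of "\<lambda>u. \<kappa>" "\<kappa> * h" p "p + h" a b]
        has_integral_const_real[of \<kappa> p "p + h"] p h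
      by (simp add: mult.commute)
    have "continuous_on {a..b} (\<lambda>u. (\<lambda>(s, u). K s u) (s, u))"
      by (rule continuous_on_compose2[OF cont]) (use s in \<open>auto intro!: continuous_intros\<close>)
    then have "continuous_on {a..b} (K s)" by simp
    then have "integral {a..b} (\<lambda>u. if u \<in> {p..p + h} then \<kappa> else 0) \<le> integral {a..b} (K s)"
      using window p nonneg[OF s] near[OF s]
      by (intro integral_le) (auto simp: integrable_continuous_interval has_integral_integrable)
    then show ?thesis using integral_unique[OF window] by simp
  qed
  have "continuous_on {a..b} (\<lambda>s. integral {a..b} (K s))"
    using integral_continuous_on_param[of "{a..b}" a b K] cont by simp
  then have "integral {a..b} (\<lambda>s. \<kappa> * h) \<le> integral {a..b} (\<lambda>s. integral {a..b} (K s))"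
    using inner by (intro integral_le) (auto intro: integrable_continuous_interval)
  then show ?thesis using h by (simp add: mult_ac)
qed

lemma compact_continuous_pos_bounded_below:
  fixes \<phi> :: "'b::topological_space \<Rightarrow> real"
  assumes "compact S" "continuous_on S \<phi>" "\<And>x. x \<in> S \<Longrightarrow> 0 < \<phi> x"
  obtains d where "0 < d" "\<And>x. x \<in> S \<Longrightarrow> d \<le> \<phi> x"
proof (cases "S = {}")
  case False
  then obtain x0 where "x0 \<in> S" "\<forall>x\<in>S. \<phi> x0 \<le> \<phi> x"
    using continuous_attains_inf assms(1,2) by blast
  then show ?thesis using that assms(3) by blast
qed (use that[of 1] in auto)

lemma lipschitz_on_vector_derivative_bound:
  fixes F :: "real \<Rightarrow> 'a::real_normed_vector"
  assumes deriv: "\<And>s. s \<in> {a..b} \<Longrightarrow> (F has_vector_derivative F' s) (at s within {a..b})"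
    and bound: "\<And>s. s \<in> {a..b} \<Longrightarrow> norm (F' s) \<le> B" and "0 \<le> B"
  shows "B-lipschitz_on {a..b} F"
proof (rule lipschitz_onI)
  fix x y assume "x \<in> {a..b}" "y \<in> {a..b}"
  moreover have "onorm (\<lambda>h. h *\<^sub>R F' s) \<le> B" if "s \<in> {a..b}" for s
    using bound[OF that] by (simp add: onorm_scaleR_left[OF bounded_linear_ident] onorm_id)
  ultimately have "norm (F x - F y) \<le> B * norm (x - y)"
    using deriv unfolding has_vector_derivative_def
    by (intro differentiable_bound[where S = "{a..b}" and f' = "\<lambda>s h. h *\<^sub>R F' s"]) auto
  then show "dist (F x) (F y) \<le> B * dist x y" by (simp add: dist_norm)
qed (rule assms)

lemma smooth_unit_speed_on_lipschitz:
  fixes f :: "real \<Rightarrow> 'a::euclidean_space"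
  assumes smooth: "smooth_unit_speed_on L f" and L: "0 < L"
  shows "1-lipschitz_on {0..L} f" and "\<exists>M. M-lipschitz_on {0..L} (tangent f L)"
proof -
  obtain D :: "nat \<Rightarrow> real \<Rightarrow> 'a" where D0: "D 0 = f"
    and deriv: "\<And>m s. s \<in> {0..L} \<Longrightarrow> (D m has_vector_derivative D (Suc m) s) (at s within {0..L})"
    and unit: "\<And>s. s \<in> {0..L} \<Longrightarrow> norm (D 1 s) = 1"
    using smooth unfolding smooth_unit_speed_on_def by blast
  show "1-lipschitz_on {0..L} f"
    using lipschitz_on_vector_derivative_bound[of 0 L f "D 1" 1] deriv[of _ 0] unit D0 by simp
  have tangent: "tangent f L s = D 1 s" if "s \<in> {0..L}" for s
    using vector_derivative_within_cbox[of 0 L s f "D 1 s"] deriv[OF that, of 0] D0 L that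
    by (simp add: tangent_def)
  have "continuous_on {0..L} (D 2)"
    using deriv[of _ 2] has_vector_derivative_continuous continuous_on_eq_continuous_within by blast
  then have "bounded (D 2 ` {0..L})"
    by (intro compact_imp_bounded compact_continuous_image) auto
  then obtain M where "0 < M" "\<And>s. s \<in> {0..L} \<Longrightarrow> norm (D 2 s) \<le> M"
    unfolding bounded_pos by blast
  then have "M-lipschitz_on {0..L} (D 1)"
    using lipschitz_on_vector_derivative_bound[of 0 L "D 1" "D 2" M] deriv
    by (simp add: numeral_2_eq_2)
  then show "\<exists>M. M-lipschitz_on {0..L} (tangent f L)"
    using tangent by (metis lipschitz_on_transform)
qed

definition gaussian :: "real \<Rightarrow> real \<Rightarrow> real" where
  "gaussian \<sigma> z = exp (- z\<^sup>2 / \<sigma>\<^sup>2)"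

lemma gaussian_nonneg [simp]: "0 \<le> gaussian \<sigma> z"
  by (simp add: gaussian_def)

lemma gaussian_le_1 [simp]: "gaussian \<sigma> z \<le> 1"
  by (simp add: gaussian_def)

lemma gaussian_antimono:
  assumes "0 \<le> z" "z \<le> z'"
  shows "gaussian \<sigma> z' \<le> gaussian \<sigma> z"
proof -
  have "z\<^sup>2 \<le> z'\<^sup>2" using assms by (intro power_mono)
  then have "z\<^sup>2 / \<sigma>\<^sup>2 \<le> z'\<^sup>2 / \<sigma>\<^sup>2" by (intro divide_right_mono) auto
  then show ?thesis by (simp add: gaussian_def)
qed

lemma gaussian_ge:
  assumes "0 < \<sigma>" "\<bar>z\<bar> \<le> C * \<sigma>"
  shows "exp (- C\<^sup>2) \<le> gaussian \<sigma> z"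
proof -
  have "\<bar>z\<bar>\<^sup>2 \<le> (C * \<sigma>)\<^sup>2" using assms by (intro power_mono) auto
  then have "z\<^sup>2 / \<sigma>\<^sup>2 \<le> C\<^sup>2" using assms by (simp add: pos_divide_le_eq power_mult_distrib)
  then show ?thesis by (simp add: gaussian_def)
qed

lemma gaussian_div_width_tendsto_0:
  "d \<noteq> 0 \<Longrightarrow> ((\<lambda>\<sigma>. gaussian \<sigma> d * A / \<sigma>) \<longlongrightarrow> 0) (at_right 0)"
  unfolding gaussian_def by real_asymp

lemma corner_bound_div_width_tendsto_0:
  assumes "1 < 2 * \<beta>" "\<beta> * a < 1"
  shows "((\<lambda>\<sigma>. ((\<sigma> powr \<beta>)\<^sup>2 + gaussian \<sigma> ((\<sigma> powr \<beta>) powr a) * A) / \<sigma>) \<longlongrightarrow> 0) (at_right 0)"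
  using assms unfolding gaussian_def by real_asymp

definition varifold_kernel :: "real \<Rightarrow> real \<Rightarrow> 'a::real_normed_vector \<Rightarrow> 'a \<Rightarrow> 'a \<Rightarrow> 'a \<Rightarrow> real" where
  "varifold_kernel \<sigma>x \<sigma>t x y v w = gaussian \<sigma>x (norm (x - y)) * gaussian \<sigma>t (norm (v - w))"

lemma varifold_kernel_nonneg [simp]: "0 \<le> varifold_kernel \<sigma>x \<sigma>t x y v w"
  by (simp add: varifold_kernel_def)

lemma varifold_kernel_le_1 [simp]: "varifold_kernel \<sigma>x \<sigma>t x y v w \<le> 1"
  unfolding varifold_kernel_def by (intro mult_le_one) auto

lemma varifold_ip_kernel:
  "varifold_ip \<sigma>x \<sigma>t f tf a b g tg c d =
     integral {a..b} (\<lambda>s. integral {c..d} (\<lambda>u. varifold_kernel \<sigma>x \<sigma>t (f s) (g u) (tf s) (tg u)))"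
  by (simp add: varifold_ip_def varifold_kernel_def gaussian_def)

lemma varifold_ip_nonneg: "0 \<le> varifold_ip \<sigma>x \<sigma>t f tf a b g tg c d"
  unfolding varifold_ip_kernel
  by (intro integral_nonneg_unconditional) (simp add: integral_nonneg_unconditional)

lemma varifold_ip_self_ge:
  fixes f tf :: "real \<Rightarrow> 'a::euclidean_space"
  assumes f: "1-lipschitz_on {a..b} f" and tf: "M-lipschitz_on {a..b} tf"
    and \<sigma>x: "0 < \<sigma>x" "\<sigma>x \<le> b - a" and k: "0 < k" "k * \<sigma>x \<le> \<sigma>t"
  shows "exp (- 1) * exp (- (M / k)\<^sup>2) * \<sigma>x * (b - a) \<le> varifold_ip \<sigma>x \<sigma>t f tf a b f tf a b"
  unfolding varifold_ip_kernel
proof (rule double_integral_ge_near_diagonal[OF \<sigma>x])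
  have on_fst: "continuous_on ({a..b} \<times> {a..b}) (\<lambda>p. F (fst p))"
    and on_snd: "continuous_on ({a..b} \<times> {a..b}) (\<lambda>p. F (snd p))"
    if "continuous_on {a..b} F" for F :: "real \<Rightarrow> 'a"
    by (auto intro!: continuous_on_compose2[OF that] continuous_intros)
  have "continuous_on {a..b} f" "continuous_on {a..b} tf"
    using f tf by (auto intro: lipschitz_on_continuous_on)
  moreover have "0 < \<sigma>t" using \<sigma>x k by (meson mult_pos_pos less_le_trans)
  ultimately show "continuous_on ({a..b} \<times> {a..b})
      (\<lambda>(s, u). varifold_kernel \<sigma>x \<sigma>t (f s) (f u) (tf s) (tf u))"
    using \<sigma>x unfolding varifold_kernel_def gaussian_def case_prod_unfold
    by (intro continuous_intros on_fst on_snd) auto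
  show "exp (- 1) * exp (- (M / k)\<^sup>2) \<le> varifold_kernel \<sigma>x \<sigma>t (f s) (f u) (tf s) (tf u)"
    if s: "s \<in> {a..b}" and u: "u \<in> {a..b}" and near: "\<bar>s - u\<bar> \<le> \<sigma>x" for s u
    unfolding varifold_kernel_def
  proof (rule mult_mono)
    have "norm (f s - f u) \<le> \<bar>s - u\<bar>"
      using lipschitz_on_normD[OF f s u] by simp
    then show "exp (- 1) \<le> gaussian \<sigma>x (norm (f s - f u))"
      using gaussian_ge[of \<sigma>x "norm (f s - f u)" 1] \<sigma>x near by simp
    have "norm (tf s - tf u) \<le> M * \<bar>s - u\<bar>"
      using lipschitz_on_normD[OF tf s u] by simp
    also have "\<dots> \<le> M * \<sigma>x"
      using near lipschitz_on_nonneg[OF tf] by (intro mult_left_mono)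
    also have "\<dots> = M / k * (k * \<sigma>x)" using k by simp
    also have "\<dots> \<le> M / k * \<sigma>t"
      using k lipschitz_on_nonneg[OF tf] by (intro mult_left_mono) auto
    finally show "exp (- (M / k)\<^sup>2) \<le> gaussian \<sigma>t (norm (tf s - tf u))"
      using gaussian_ge \<open>0 < \<sigma>t\<close> by simp
  qed auto
qed simp

(* f and g are the edges [x_i, x_j] and [x_i, x_k], parametrised by arc length from a0 = L i;
   tangent_gap_mono is (A2) and tangent_turns is (A3) for the first edge. *)
locale branching_arcs =
  fixes f g tf tg :: "real \<Rightarrow> 'a::euclidean_space" and a0 b c M a :: real and U :: "'a set"
  assumes lengths_pos: "a0 < b" "a0 < c"
    and f_lipschitz: "1-lipschitz_on {a0..b} f"
    and tf_lipschitz: "M-lipschitz_on {a0..b} tf"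
    and g_continuous: "continuous_on {a0..c} g"
    and meet_only_at_start: "\<And>s u. s \<in> {a0..b} \<Longrightarrow> u \<in> {a0..c} \<Longrightarrow> f s = g u \<Longrightarrow> s = a0 \<and> u = a0"
    and tangent_gap_mono: "\<And>s s' u u'. s \<in> {a0..b} \<Longrightarrow> s' \<in> {a0..b} \<Longrightarrow> u \<in> {a0..c} \<Longrightarrow> u' \<in> {a0..c}
      \<Longrightarrow> (s - a0) + (u - a0) \<le> (s' - a0) + (u' - a0) \<Longrightarrow> norm (tf s - tg u) \<le> norm (tf s' - tg u')"
    and exponent: "0 < a" "a < 2"
    and start_nhd: "open U" "f a0 \<in> U"
    and tangent_turns: "\<And>s. s \<in> {a0..b} \<Longrightarrow> f s \<in> U \<Longrightarrow> (s - a0) powr a \<le> norm (tf s - tf a0)"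
begin

lemma tangent_turns_near_start:
  obtains e where "0 < e" "\<And>s. s \<in> {a0..b} \<Longrightarrow> s - a0 < e \<Longrightarrow> (s - a0) powr a \<le> norm (tf s - tf a0)"
proof -
  obtain e where e: "0 < e" "ball (f a0) e \<subseteq> U"
    using start_nhd open_contains_ball by blast
  have "f s \<in> U" if "s \<in> {a0..b}" "s - a0 < e" for s
  proof -
    have "dist (f a0) (f s) \<le> 1 * dist a0 s"
      using lipschitz_onD[OF f_lipschitz] that lengths_pos by simp
    then show ?thesis using that e by (auto simp: dist_real_def)
  qed
  then show ?thesis using that e(1) tangent_turns by blast
qed

lemma tangent_gap_near_start:
  obtains \<eta> where "0 < \<eta>" "\<eta> \<le> b - a0"
    "\<And>s u \<tau>. s \<in> {a0..b} \<Longrightarrow> u \<in> {a0..c} \<Longrightarrow> 0 < \<tau> \<Longrightarrow> \<tau> \<le> (s - a0) + (u - a0)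
      \<Longrightarrow> (s - a0) + (u - a0) < \<eta> \<Longrightarrow> \<tau> powr a \<le> \<eta> \<Longrightarrow> \<tau> powr a \<le> norm (tf s - tg u)"
proof -
  obtain e where e: "0 < e" "\<And>s. s \<in> {a0..b} \<Longrightarrow> s - a0 < e \<Longrightarrow> (s - a0) powr a \<le> norm (tf s - tf a0)"
    using tangent_turns_near_start by blast
  \<comment> \<open>The value 1 is arbitrary: \<open>c0\<close> only matters when the tangents at \<open>a0\<close> differ.\<close>
  define c0 where "c0 = (if tf a0 = tg a0 then 1 else norm (tf a0 - tg a0))"
  define \<eta> where "\<eta> = min (min e (b - a0)) c0"
  have "0 < \<eta>" "\<eta> \<le> b - a0" using e lengths_pos by (auto simp: \<eta>_def c0_def)
  moreover have "\<tau> powr a \<le> norm (tf s - tg u)"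
    if s: "s \<in> {a0..b}" and u: "u \<in> {a0..c}" and \<tau>: "0 < \<tau>" "\<tau> \<le> (s - a0) + (u - a0)"
      and small: "(s - a0) + (u - a0) < \<eta>" "\<tau> powr a \<le> \<eta>" for s u \<tau>
  proof (cases "tf a0 = tg a0")
    case True
    define w where "w = (s - a0) + (u - a0)"
    have w: "a0 + w \<in> {a0..b}" "w < e" using s u small by (auto simp: w_def \<eta>_def)
    have "\<tau> powr a \<le> w powr a" using \<tau> exponent by (intro powr_mono2) (auto simp: w_def)
    also have "\<dots> \<le> norm (tf (a0 + w) - tf a0)" using e(2)[OF w(1)] w(2) by simp
    also have "\<dots> = norm (tf (a0 + w) - tg a0)" using True by simp
    also have "\<dots> \<le> norm (tf s - tg u)"
      using w(1) s u lengths_pos by (intro tangent_gap_mono) (auto simp: w_def)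
    finally show ?thesis .
  next
    case False
    have "\<tau> powr a \<le> norm (tf a0 - tg a0)" using small False by (simp add: \<eta>_def c0_def)
    also have "\<dots> \<le> norm (tf s - tg u)"
      using s u lengths_pos by (intro tangent_gap_mono) auto
    finally show ?thesis .
  qed
  ultimately show ?thesis using that by blast
qed

lemma arcs_apart_off_start:
  assumes "0 < \<eta>"
  obtains d where "0 < d"
    "\<And>s u. s \<in> {a0..b} \<Longrightarrow> u \<in> {a0..c} \<Longrightarrow> a0 + \<eta> \<le> s \<or> a0 + \<eta> \<le> u \<Longrightarrow> d \<le> norm (f s - g u)"
proof -
  define S where "S = {a0..b} \<times> {a0..c} \<inter> {p. a0 + \<eta> \<le> fst p \<or> a0 + \<eta> \<le> snd p}"
  have "compact S"
    unfolding S_def by (intro compact_Int_closed compact_Times compact_Icc closed_Collect_disj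
        closed_Collect_le continuous_intros)
  have "continuous_on S (\<lambda>p. f (fst p))"
    by (rule continuous_on_compose2[OF lipschitz_on_continuous_on[OF f_lipschitz]])
      (auto simp: S_def intro!: continuous_intros)
  moreover have "continuous_on S (\<lambda>p. g (snd p))"
    by (rule continuous_on_compose2[OF g_continuous]) (auto simp: S_def intro!: continuous_intros)
  ultimately have "continuous_on S (\<lambda>p. norm (f (fst p) - g (snd p)))"
    by (intro continuous_intros)
  moreover have "0 < norm (f (fst p) - g (snd p))" if "p \<in> S" for p
    using that meet_only_at_start[of "fst p" "snd p"] \<open>0 < \<eta>\<close> by (auto simp: S_def)
  ultimately obtain d where "0 < d" "\<And>p. p \<in> S \<Longrightarrow> d \<le> norm (f (fst p) - g (snd p))"
    using compact_continuous_pos_bounded_below[OF \<open>compact S\<close>] by blast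
  then show ?thesis using that unfolding S_def by fastforce
qed

lemma kernel_small_off_corner:
  obtains \<eta> d where "0 < \<eta>" "\<eta> \<le> b - a0" "\<eta> \<le> c - a0" "0 < d"
    "\<And>\<tau> \<sigma>x \<sigma>t s u. 0 < \<tau> \<Longrightarrow> \<tau> \<le> \<eta> \<Longrightarrow> \<tau> powr a \<le> \<eta> \<Longrightarrow> s \<in> {a0..b} \<Longrightarrow> u \<in> {a0..c}
      \<Longrightarrow> a0 + \<tau> < s \<or> a0 + \<tau> < u
      \<Longrightarrow> varifold_kernel \<sigma>x \<sigma>t (f s) (g u) (tf s) (tg u) \<le> gaussian \<sigma>x d + gaussian \<sigma>t (\<tau> powr a)"
proof -
  obtain \<eta>1 where \<eta>1: "0 < \<eta>1" "\<eta>1 \<le> b - a0"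
    and gap: "\<And>s u \<tau>. s \<in> {a0..b} \<Longrightarrow> u \<in> {a0..c} \<Longrightarrow> 0 < \<tau> \<Longrightarrow> \<tau> \<le> (s - a0) + (u - a0)
      \<Longrightarrow> (s - a0) + (u - a0) < \<eta>1 \<Longrightarrow> \<tau> powr a \<le> \<eta>1 \<Longrightarrow> \<tau> powr a \<le> norm (tf s - tg u)"
    using tangent_gap_near_start by blast
  define \<eta> where "\<eta> = min (\<eta>1 / 2) (c - a0)"
  have \<eta>: "0 < \<eta>" "\<eta> \<le> b - a0" "\<eta> \<le> c - a0" "2 * \<eta> \<le> \<eta>1"
    using \<eta>1 lengths_pos by (auto simp: \<eta>_def min_def)
  obtain d where d: "0 < d"
    and apart: "\<And>s u. s \<in> {a0..b} \<Longrightarrow> u \<in> {a0..c} \<Longrightarrow> a0 + \<eta> \<le> s \<or> a0 + \<eta> \<le> u \<Longrightarrow> d \<le> norm (f s - g u)"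
    using arcs_apart_off_start[OF \<eta>(1)] by blast
  have "varifold_kernel \<sigma>x \<sigma>t (f s) (g u) (tf s) (tg u) \<le> gaussian \<sigma>x d + gaussian \<sigma>t (\<tau> powr a)"
    if \<tau>: "0 < \<tau>" "\<tau> \<le> \<eta>" "\<tau> powr a \<le> \<eta>" and s: "s \<in> {a0..b}" and u: "u \<in> {a0..c}"
      and off: "a0 + \<tau> < s \<or> a0 + \<tau> < u" for \<tau> \<sigma>x \<sigma>t s u
  proof (cases "a0 + \<eta> \<le> s \<or> a0 + \<eta> \<le> u")
    case True
    have "varifold_kernel \<sigma>x \<sigma>t (f s) (g u) (tf s) (tg u) \<le> gaussian \<sigma>x (norm (f s - g u))"
      unfolding varifold_kernel_def by (simp add: mult_left_le)
    also have "\<dots> \<le> gaussian \<sigma>x d"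
      using apart[OF s u True] d by (intro gaussian_antimono) auto
    finally show ?thesis using gaussian_nonneg[of \<sigma>t "\<tau> powr a"] by linarith
  next
    case False
    have "\<tau> powr a \<le> norm (tf s - tg u)"
      using False off s u \<tau> \<eta> by (intro gap) auto
    then have "gaussian \<sigma>t (norm (tf s - tg u)) \<le> gaussian \<sigma>t (\<tau> powr a)"
      by (intro gaussian_antimono) auto
    moreover have "varifold_kernel \<sigma>x \<sigma>t (f s) (g u) (tf s) (tg u) \<le> gaussian \<sigma>t (norm (tf s - tg u))"
      unfolding varifold_kernel_def by (simp add: mult_left_le_one_le)
    ultimately show ?thesis using gaussian_nonneg[of \<sigma>x d] by linarith
  qed
  with \<eta> d that show ?thesis by blast
qed

lemma cross_term_le_corner:
  obtains \<eta> d where "0 < \<eta>" "0 < d"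
    "\<And>\<tau> \<sigma>x \<sigma>t. 0 < \<tau> \<Longrightarrow> \<tau> \<le> \<eta> \<Longrightarrow> \<tau> powr a \<le> \<eta> \<Longrightarrow> varifold_ip \<sigma>x \<sigma>t f tf a0 b g tg a0 c
      \<le> \<tau> * \<tau> + (gaussian \<sigma>x d + gaussian \<sigma>t (\<tau> powr a)) * (b - a0) * (c - a0)"
proof -
  obtain \<eta> d where \<eta>: "0 < \<eta>" "\<eta> \<le> b - a0" "\<eta> \<le> c - a0" and d: "0 < d"
    and off_corner: "\<And>\<tau> \<sigma>x \<sigma>t s u. 0 < \<tau> \<Longrightarrow> \<tau> \<le> \<eta> \<Longrightarrow> \<tau> powr a \<le> \<eta> \<Longrightarrow> s \<in> {a0..b} \<Longrightarrow> u \<in> {a0..c}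
      \<Longrightarrow> a0 + \<tau> < s \<or> a0 + \<tau> < u
      \<Longrightarrow> varifold_kernel \<sigma>x \<sigma>t (f s) (g u) (tf s) (tg u) \<le> gaussian \<sigma>x d + gaussian \<sigma>t (\<tau> powr a)"
    using kernel_small_off_corner by blast
  have "varifold_ip \<sigma>x \<sigma>t f tf a0 b g tg a0 c
      \<le> \<tau> * \<tau> + (gaussian \<sigma>x d + gaussian \<sigma>t (\<tau> powr a)) * (b - a0) * (c - a0)"
    if "0 < \<tau>" "\<tau> \<le> \<eta>" "\<tau> powr a \<le> \<eta>" for \<tau> \<sigma>x \<sigma>t
    unfolding varifold_ip_kernel
    by (rule double_integral_le_corner) (use that \<eta> off_corner in auto)
  with \<eta> d that show ?thesis by blast
qed

lemma cross_term_le_widths: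
  assumes "0 < C"
  obtains \<delta> where "0 < \<delta>"
    "\<And>\<sigma>x \<sigma>t. 0 < \<sigma>x \<Longrightarrow> \<sigma>x < \<delta> \<Longrightarrow> 0 < \<sigma>t \<Longrightarrow> \<sigma>t < \<delta>
      \<Longrightarrow> varifold_ip \<sigma>x \<sigma>t f tf a0 b g tg a0 c \<le> C * (\<sigma>x + \<sigma>t)"
proof -
  obtain \<eta> d where \<eta>: "0 < \<eta>" and d: "0 < d"
    and cross: "\<And>\<tau> \<sigma>x \<sigma>t. 0 < \<tau> \<Longrightarrow> \<tau> \<le> \<eta> \<Longrightarrow> \<tau> powr a \<le> \<eta> \<Longrightarrow> varifold_ip \<sigma>x \<sigma>t f tf a0 b g tg a0 c
      \<le> \<tau> * \<tau> + (gaussian \<sigma>x d + gaussian \<sigma>t (\<tau> powr a)) * (b - a0) * (c - a0)"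
    using cross_term_le_corner by blast
  define A where "A = (b - a0) * (c - a0)"
  \<comment> \<open>\<open>\<tau> = \<sigma>t powr \<beta>\<close> with \<open>1/2 < \<beta> < 1/a\<close>: the corner area \<open>\<tau>\<^sup>2\<close> is \<open>o(\<sigma>t)\<close>,
    while \<open>\<tau> powr a\<close> still dominates \<open>\<sigma>t\<close>.\<close>
  define \<beta> where "\<beta> = (a + 2) / (4 * a)"
  have \<beta>: "0 < \<beta>" "1 < 2 * \<beta>" "\<beta> * a < 1"
    using exponent by (auto simp: \<beta>_def field_simps)
  have "((\<lambda>\<sigma>. \<sigma> powr \<beta>) \<longlongrightarrow> 0) (at_right 0)" "((\<lambda>\<sigma>. (\<sigma> powr \<beta>) powr a) \<longlongrightarrow> 0) (at_right 0)"
    using \<beta> exponent by real_asymp+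
  then have "\<forall>\<^sub>F \<sigma> in at_right 0. \<sigma> powr \<beta> < \<eta> \<and> (\<sigma> powr \<beta>) powr a < \<eta> \<and>
      ((\<sigma> powr \<beta>)\<^sup>2 + gaussian \<sigma> ((\<sigma> powr \<beta>) powr a) * A) / \<sigma> < C"
    using \<eta> \<open>0 < C\<close> corner_bound_div_width_tendsto_0[OF \<beta>(2,3)]
    by (intro eventually_conj order_tendstoD(2)) auto
  then obtain \<delta>t where \<delta>t: "0 < \<delta>t" and small_t: "\<And>\<sigma>. 0 < \<sigma> \<Longrightarrow> \<sigma> < \<delta>t \<Longrightarrow> \<sigma> powr \<beta> < \<eta> \<and>
      (\<sigma> powr \<beta>) powr a < \<eta> \<and> ((\<sigma> powr \<beta>)\<^sup>2 + gaussian \<sigma> ((\<sigma> powr \<beta>) powr a) * A) / \<sigma> < C"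
    unfolding eventually_at_right_field by auto
  have "\<forall>\<^sub>F \<sigma> in at_right 0. gaussian \<sigma> d * A / \<sigma> < C"
    using d \<open>0 < C\<close> by (intro order_tendstoD(2)[OF gaussian_div_width_tendsto_0]) auto
  then obtain \<delta>x where \<delta>x: "0 < \<delta>x" and small_x: "\<And>\<sigma>. 0 < \<sigma> \<Longrightarrow> \<sigma> < \<delta>x \<Longrightarrow> gaussian \<sigma> d * A / \<sigma> < C"
    unfolding eventually_at_right_field by auto
  have "varifold_ip \<sigma>x \<sigma>t f tf a0 b g tg a0 c \<le> C * (\<sigma>x + \<sigma>t)"
    if \<sigma>x: "0 < \<sigma>x" "\<sigma>x < min \<delta>t \<delta>x" and \<sigma>t: "0 < \<sigma>t" "\<sigma>t < min \<delta>t \<delta>x" for \<sigma>x \<sigma>t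
  proof -
    define \<tau> where "\<tau> = \<sigma>t powr \<beta>"
    have t: "\<tau> < \<eta>" "\<tau> powr a < \<eta>" "\<tau>\<^sup>2 + gaussian \<sigma>t (\<tau> powr a) * A < C * \<sigma>t"
      using small_t[OF \<sigma>t(1)] \<sigma>t by (auto simp: \<tau>_def pos_divide_less_eq mult.commute)
    have x: "gaussian \<sigma>x d * A < C * \<sigma>x"
      using small_x[OF \<sigma>x(1)] \<sigma>x by (auto simp: pos_divide_less_eq mult.commute)
    have "varifold_ip \<sigma>x \<sigma>t f tf a0 b g tg a0 c
        \<le> \<tau> * \<tau> + (gaussian \<sigma>x d + gaussian \<sigma>t (\<tau> powr a)) * (b - a0) * (c - a0)"
      using t \<sigma>t by (intro cross) (auto simp: \<tau>_def)
    also have "\<dots> = (\<tau>\<^sup>2 + gaussian \<sigma>t (\<tau> powr a) * A) + gaussian \<sigma>x d * A"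
      by (simp add: A_def algebra_simps power2_eq_square)
    finally show ?thesis using t x by (simp add: distrib_left)
  qed
  then show ?thesis using that[of "min \<delta>t \<delta>x"] \<delta>t \<delta>x by auto
qed

lemma cross_term_negligible:
  "\<forall>k1>0. \<forall>k2>0. \<forall>\<epsilon>>0. \<exists>\<delta>>0. \<forall>\<sigma>x \<sigma>t.
     0 < \<sigma>x \<and> \<sigma>x < \<delta> \<and> 0 < \<sigma>t \<and> \<sigma>t < \<delta> \<and> k1 * \<sigma>x \<le> \<sigma>t \<and> \<sigma>t \<le> k2 * \<sigma>x \<longrightarrow>
     \<bar>varifold_ip \<sigma>x \<sigma>t f tf a0 b g tg a0 c\<bar>
     \<le> \<epsilon> * (varifold_ip \<sigma>x \<sigma>t f tf a0 b f tf a0 b + varifold_ip \<sigma>x \<sigma>t g tg a0 c g tg a0 c)"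
proof (intro allI impI)
  fix k1 k2 \<epsilon> :: real
  assume k1: "0 < k1" and k2: "0 < k2" and \<epsilon>: "0 < \<epsilon>"
  define \<kappa> where "\<kappa> = exp (- 1) * exp (- (M / k1)\<^sup>2) * (b - a0)"
  have "0 < \<epsilon> * \<kappa> / (1 + k2)" using \<epsilon> k2 lengths_pos by (simp add: \<kappa>_def)
  then obtain \<delta> where \<delta>: "0 < \<delta>"
    and cross: "\<And>\<sigma>x \<sigma>t. 0 < \<sigma>x \<Longrightarrow> \<sigma>x < \<delta> \<Longrightarrow> 0 < \<sigma>t \<Longrightarrow> \<sigma>t < \<delta>
      \<Longrightarrow> varifold_ip \<sigma>x \<sigma>t f tf a0 b g tg a0 c \<le> \<epsilon> * \<kappa> / (1 + k2) * (\<sigma>x + \<sigma>t)"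
    using cross_term_le_widths by blast
  show "\<exists>\<delta>>0. \<forall>\<sigma>x \<sigma>t.
     0 < \<sigma>x \<and> \<sigma>x < \<delta> \<and> 0 < \<sigma>t \<and> \<sigma>t < \<delta> \<and> k1 * \<sigma>x \<le> \<sigma>t \<and> \<sigma>t \<le> k2 * \<sigma>x \<longrightarrow>
     \<bar>varifold_ip \<sigma>x \<sigma>t f tf a0 b g tg a0 c\<bar>
     \<le> \<epsilon> * (varifold_ip \<sigma>x \<sigma>t f tf a0 b f tf a0 b + varifold_ip \<sigma>x \<sigma>t g tg a0 c g tg a0 c)"
  proof (intro exI[of _ "min \<delta> (b - a0)"] conjI allI impI)
    fix \<sigma>x \<sigma>t assume \<sigma>: "0 < \<sigma>x \<and> \<sigma>x < min \<delta> (b - a0) \<and> 0 < \<sigma>t \<and> \<sigma>t < min \<delta> (b - a0)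
      \<and> k1 * \<sigma>x \<le> \<sigma>t \<and> \<sigma>t \<le> k2 * \<sigma>x"
    have "varifold_ip \<sigma>x \<sigma>t f tf a0 b g tg a0 c \<le> \<epsilon> * \<kappa> / (1 + k2) * (\<sigma>x + \<sigma>t)"
      using \<sigma> by (intro cross) auto
    also have "\<dots> \<le> \<epsilon> * \<kappa> / (1 + k2) * ((1 + k2) * \<sigma>x)"
      using \<sigma> \<open>0 < \<epsilon> * \<kappa> / (1 + k2)\<close> by (intro mult_left_mono) (auto simp: algebra_simps)
    also have "\<dots> = \<epsilon> * (exp (- 1) * exp (- (M / k1)\<^sup>2) * \<sigma>x * (b - a0))"
      using k2 by (simp add: \<kappa>_def)
    also have "\<dots> \<le> \<epsilon> * varifold_ip \<sigma>x \<sigma>t f tf a0 b f tf a0 b"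
      using varifold_ip_self_ge[OF f_lipschitz tf_lipschitz, of \<sigma>x k1 \<sigma>t] \<sigma> k1 \<epsilon>
      by (intro mult_left_mono) auto
    also have "\<dots> \<le> \<epsilon> * (varifold_ip \<sigma>x \<sigma>t f tf a0 b f tf a0 b + varifold_ip \<sigma>x \<sigma>t g tg a0 c g tg a0 c)"
      using varifold_ip_nonneg \<epsilon> by (intro mult_left_mono) auto
    finally show "\<bar>varifold_ip \<sigma>x \<sigma>t f tf a0 b g tg a0 c\<bar>
      \<le> \<epsilon> * (varifold_ip \<sigma>x \<sigma>t f tf a0 b f tf a0 b + varifold_ip \<sigma>x \<sigma>t g tg a0 c g tg a0 c)"
      by (simp add: varifold_ip_nonneg)
  qed (use \<delta> lengths_pos in auto)
qed

end

lemma tree_embedding_edge: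
  assumes "tree_embedding V r par xp P L" "v \<in> V - {r}"
  shows "L (par v) < L v" "inj_on (P v) {L (par v)..L v}"
  using assms unfolding tree_embedding_def by auto

lemma tree_embedding_length_nonneg:
  assumes tree: "rooted_tree V r par" and emb: "tree_embedding V r par xp P L" and "v \<in> V"
  shows "0 \<le> L v"
proof -
  obtain m where "(par ^^ m) v = r" using tree \<open>v \<in> V\<close> unfolding rooted_tree_def by blast
  with \<open>v \<in> V\<close> show ?thesis
  proof (induction m arbitrary: v)
    case 0
    then show ?case using emb by (simp add: tree_embedding_def)
  next
    case (Suc m)
    show ?case
    proof (cases "v = r")
      case True
      then show ?thesis using emb by (simp add: tree_embedding_def)
    next
      case False
      have "par v \<in> V" using tree Suc.prems False unfolding rooted_tree_def by blast
      moreover have "(par ^^ m) (par v) = r" using Suc.prems by (metis comp_apply funpow_Suc_right)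
      ultimately have "0 \<le> L (par v)" by (rule Suc.IH)
      moreover have "L (par v) < L v" using tree_embedding_edge(1)[OF emb] False Suc.prems by blast
      ultimately show ?thesis by simp
    qed
  qed
qed

lemma tree_embedding_edge_start:
  assumes tree: "rooted_tree V r par" and emb: "tree_embedding V r par xp P L" and v: "v \<in> V - {r}"
  shows "P v (L (par v)) = xp (par v)"
proof -
  have "par v \<in> V" using tree v unfolding rooted_tree_def by blast
  then have "0 \<le> L (par v)" by (rule tree_embedding_length_nonneg[OF tree emb])
  then have "P v (L (par v)) = P (par v) (L (par v))"
    using emb v unfolding tree_embedding_def by auto
  also have "\<dots> = xp (par v)" using emb \<open>par v \<in> V\<close> unfolding tree_embedding_def by auto
  finally show ?thesis .
qed

lemma tree_embedding_sibling_edges_meet_at_parent: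
  assumes tree: "rooted_tree V r par" and emb: "tree_embedding V r par xp P L"
    and j: "j \<in> V - {r}" "par j = i" and k: "k \<in> V - {r}" "par k = i" and "j \<noteq> k"
    and s: "s \<in> {L i..L j}" and u: "u \<in> {L i..L k}" and meet: "P j s = P k u"
  shows "s = L i \<and> u = L i"
proof -
  have "P j s \<in> edge_img P L par j" using s j unfolding edge_img_def by auto
  moreover have "P k u \<in> edge_img P L par k" using u k unfolding edge_img_def by auto
  ultimately have "P j s \<in> edge_img P L par j \<inter> edge_img P L par k" using meet by simp
  also have "\<dots> \<subseteq> xp ` ({par j, j} \<inter> {par k, k})"
    using emb j k \<open>j \<noteq> k\<close> unfolding tree_embedding_def by blast
  also have "\<dots> \<subseteq> {xp i}" using j k \<open>j \<noteq> k\<close> by auto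
  finally have "P j s = P j (L i)" "P k u = P k (L i)"
    using tree_embedding_edge_start[OF tree emb j(1)] tree_embedding_edge_start[OF tree emb k(1)]
      j k meet by auto
  moreover have "inj_on (P j) {L i..L j}" "inj_on (P k) {L i..L k}"
    using tree_embedding_edge(2)[OF emb j(1)] tree_embedding_edge(2)[OF emb k(1)] j(2) k(2)
    by simp_all
  moreover have "L i \<in> {L i..L j}" "L i \<in> {L i..L k}" using s u by auto
  ultimately show ?thesis using s u by (auto dest: inj_onD)
qed

theorem lemma2:
  fixes V :: "'v set" and r :: 'v and par :: "'v \<Rightarrow> 'v"
    and xp :: "'v \<Rightarrow> 'a::euclidean_space" and P :: "'v \<Rightarrow> real \<Rightarrow> 'a" and L :: "'v \<Rightarrow> real"
    and i j k :: 'v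
  assumes tree: "rooted_tree V r par"
    and emb: "tree_embedding V r par xp P L"
    and ij: "j \<in> V - {r}" "par j = i"
    and ik: "k \<in> V - {r}" "par k = i"
    and jk: "j \<noteq> k"
    and A2: "\<forall>s\<in>{L i..L j}. \<forall>s'\<in>{L i..L j}. \<forall>u\<in>{L i..L k}. \<forall>u'\<in>{L i..L k}.
              (s - L i) + (u - L i) \<le> (s' - L i) + (u' - L i) \<longrightarrow>
              norm (tangent (P j) (L j) s - tangent (P k) (L k) u)
                \<le> norm (tangent (P j) (L j) s' - tangent (P k) (L k) u')"
    and A3: "\<exists>U a. open U \<and> xp i \<in> U \<and> 0 < a \<and> a < 2 \<and>
              (\<forall>s\<in>{L i..L j}. P j s \<in> U \<longrightarrow>
                 norm (tangent (P j) (L j) s - tangent (P j) (L j) (L i)) \<ge> (s - L i) powr a) \<and>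
              (\<forall>u\<in>{L i..L k}. P k u \<in> U \<longrightarrow>
                 norm (tangent (P k) (L k) u - tangent (P k) (L k) (L i)) \<ge> (u - L i) powr a)"
  shows "\<forall>k1>0. \<forall>k2>0. \<forall>\<epsilon>>0. \<exists>\<delta>>0. \<forall>\<sigma>x \<sigma>t.
           0 < \<sigma>x \<and> \<sigma>x < \<delta> \<and> 0 < \<sigma>t \<and> \<sigma>t < \<delta> \<and> k1 * \<sigma>x \<le> \<sigma>t \<and> \<sigma>t \<le> k2 * \<sigma>x \<longrightarrow>
           \<bar>varifold_ip \<sigma>x \<sigma>t (P j) (tangent (P j) (L j)) (L i) (L j)
                               (P k) (tangent (P k) (L k)) (L i) (L k)\<bar>
           \<le> \<epsilon> * (varifold_ip \<sigma>x \<sigma>t (P j) (tangent (P j) (L j)) (L i) (L j)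
                                  (P j) (tangent (P j) (L j)) (L i) (L j)
                   + varifold_ip \<sigma>x \<sigma>t (P k) (tangent (P k) (L k)) (L i) (L k)
                                  (P k) (tangent (P k) (L k)) (L i) (L k))"
proof -
  have "i \<in> V" using tree ij unfolding rooted_tree_def by blast
  then have Li: "0 \<le> L i" by (rule tree_embedding_length_nonneg[OF tree emb])
  have lengths: "L i < L j" "L i < L k"
    using tree_embedding_edge(1)[OF emb ij(1)] tree_embedding_edge(1)[OF emb ik(1)] ij(2) ik(2)
    by simp_all
  have smooth: "smooth_unit_speed_on (L j) (P j)" "smooth_unit_speed_on (L k) (P k)"
    using emb ij ik unfolding tree_embedding_def by auto
  obtain M where "M-lipschitz_on {0..L j} (tangent (P j) (L j))"
    using smooth_unit_speed_on_lipschitz(2)[OF smooth(1)] Li lengths by auto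
  moreover have "1-lipschitz_on {0..L j} (P j)" "1-lipschitz_on {0..L k} (P k)"
    using smooth_unit_speed_on_lipschitz(1)[OF smooth(1)]
      smooth_unit_speed_on_lipschitz(1)[OF smooth(2)] Li lengths by auto
  moreover have "{L i..L j} \<subseteq> {0..L j}" "{L i..L k} \<subseteq> {0..L k}" using Li by auto
  ultimately have lipschitz: "M-lipschitz_on {L i..L j} (tangent (P j) (L j))"
      "1-lipschitz_on {L i..L j} (P j)" "1-lipschitz_on {L i..L k} (P k)"
    by (auto intro: lipschitz_on_subset)
  obtain U a where "open U" "xp i \<in> U" "0 < a" "a < 2"
    and "\<forall>s\<in>{L i..L j}. P j s \<in> U \<longrightarrow>
      norm (tangent (P j) (L j) s - tangent (P j) (L j) (L i)) \<ge> (s - L i) powr a"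
    using A3 by blast
  moreover have "P j (L i) = xp i" using tree_embedding_edge_start[OF tree emb ij(1)] ij(2) by simp
  ultimately interpret branching_arcs "P j" "P k" "tangent (P j) (L j)" "tangent (P k) (L k)"
      "L i" "L j" "L k" M a U
    using lengths lipschitz lipschitz_on_continuous_on[OF lipschitz(3)] A2
      tree_embedding_sibling_edges_meet_at_parent[OF tree emb ij ik jk]
    by unfold_locales auto
  show ?thesis by (rule cross_term_negligible)
qed

end
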